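(* Let $\hat K$ be a knot. The linking form of $\hat K\#\hat K$ has trivial isotropic cone (i.e. $\Lambda_0(\hat K\#\hat K)=\{0\}$) if and only if $\det(\hat K)$ is a product of distinct primes, each of which is congruent to $3\bmod 4$.
   Context: For a knot $K\subset S^3$, $D_K$ is the double branched cover of $S^3$ over $K$; $H_1(D_K;\mathbb{Z})$ is finite of odd order $\det(K)=|\Delta_K(-1)|$, and $\lambda:H_1(D_K)\times H_1(D_K)\to\mathbb{Q}/\mathbb{Z}$ is the standard symmetric non-degenerate linking form. The isotropic cone is $\Lambda_0(K)=\{g\in H_1(D_K):\lambda(g,g)=0\}$. $\hat K\#\hat K$ is the connected sum of $\hat K$ with itself (so its $H_1$ with linking form is the orthogonal sum of two copies of that of $\hat K$). *)

theory Defs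
  imports "HOL-Algebra.Algebra" "HOL-Number_Theory.Number_Theory" "HOL-Computational_Algebra.Squarefree"
begin

text \<open>Q/Z is represented by rat-valued functions read modulo the integers:
  a value q represents its class q + Z, and "q = 0 in Q/Z" is "q \<in> \<int>".\<close>

definition linking_form :: "('a, 'm) monoid_scheme \<Rightarrow> ('a \<Rightarrow> 'a \<Rightarrow> rat) \<Rightarrow> bool" where
  "linking_form G lam \<longleftrightarrow>
     (\<forall>x\<in>carrier G. \<forall>y\<in>carrier G. lam x y - lam y x \<in> \<int>) \<and>
     (\<forall>x\<in>carrier G. \<forall>y\<in>carrier G. \<forall>z\<in>carrier G.
         lam (x \<otimes>\<^bsub>G\<^esub> y) z - (lam x z + lam y z) \<in> \<int>) \<and>
     (\<forall>x\<in>carrier G. (\<forall>y\<in>carrier G. lam x y \<in> \<int>) \<longrightarrow> x = \<one>\<^bsub>G\<^esub>)"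

definition orth_sum :: "('a \<Rightarrow> 'a \<Rightarrow> rat) \<Rightarrow> ('b \<Rightarrow> 'b \<Rightarrow> rat) \<Rightarrow> ('a \<times> 'b \<Rightarrow> 'a \<times> 'b \<Rightarrow> rat)" where
  "orth_sum lam mu = (\<lambda>(a, b) (c, d). lam a c + mu b d)"

definition isotropic_cone :: "('a, 'm) monoid_scheme \<Rightarrow> ('a \<Rightarrow> 'a \<Rightarrow> rat) \<Rightarrow> 'a set" where
  "isotropic_cone G lam = {g \<in> carrier G. lam g g \<in> \<int>}"

end

theory Submission
  imports Defs
begin

(* Write q(g) = lam g g, so that (g, h) is isotropic for the doubled form iff q(g) + q(h) = 0
   in Q/Z.  If a prime p dividing the order is 2 or 1 mod 4, pick j with p dvd j^2 + 1 and a
   of order p: then (a, a^j) is isotropic, as q(a^j) = j^2 q(a) and p q(a) = 0.  If p^2 divides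
   the order, a subgroup of order p^2 contains either some c of order p^2, and (c^p, 1) is
   isotropic, or two independent elements a, b of order p; after replacing b by a translate
   a^t b orthogonal to a, q(a^x b) + q(a^y) = (x^2 + y^2) q(a) + q(b), and x^2 + y^2 takes
   every value modulo p.
   Conversely, if the order is squarefree with all prime factors 3 mod 4, a suitable power of
   a nontrivial isotropic pair is a pair (a, a^j) in the cyclic p-torsion for some prime p, so
   (1 + j^2) q(a) = 0.  By nondegeneracy q(a) has exact order p, hence p dvd 1 + j^2, which is
   impossible for p = 3 mod 4. *)

section \<open>Congruence modulo the integers\<close>

definition cong_Ints :: "'a::ring_1 \<Rightarrow> 'a \<Rightarrow> bool" (infix "\<equiv>\<^sub>\<int>" 50) where
  "a \<equiv>\<^sub>\<int> b \<longleftrightarrow> a - b \<in> \<int>"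

lemma cong_Ints_refl [simp]: "a \<equiv>\<^sub>\<int> a"
  by (simp add: cong_Ints_def)

lemma cong_Ints_sym: "a \<equiv>\<^sub>\<int> b \<Longrightarrow> b \<equiv>\<^sub>\<int> a"
  unfolding cong_Ints_def by (metis Ints_minus minus_diff_eq)

lemma cong_Ints_trans [trans]: "a \<equiv>\<^sub>\<int> b \<Longrightarrow> b \<equiv>\<^sub>\<int> c \<Longrightarrow> a \<equiv>\<^sub>\<int> c"
  unfolding cong_Ints_def by (drule (1) Ints_add) simp

lemma cong_Ints_add: "a \<equiv>\<^sub>\<int> b \<Longrightarrow> c \<equiv>\<^sub>\<int> d \<Longrightarrow> a + c \<equiv>\<^sub>\<int> b + d"
  unfolding cong_Ints_def by (drule (1) Ints_add) (simp add: algebra_simps)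

lemma cong_Ints_mult_left: "a \<equiv>\<^sub>\<int> b \<Longrightarrow> k \<in> \<int> \<Longrightarrow> k * a \<equiv>\<^sub>\<int> k * b"
  unfolding cong_Ints_def by (drule (1) Ints_mult) (simp add: algebra_simps)

lemma cong_Ints_add_Ints: "d \<in> \<int> \<Longrightarrow> a + d \<equiv>\<^sub>\<int> a"
  by (simp add: cong_Ints_def)

lemma cong_Ints_Ints_iff: "a \<equiv>\<^sub>\<int> b \<Longrightarrow> a \<in> \<int> \<longleftrightarrow> b \<in> \<int>"
  unfolding cong_Ints_def using Ints_diff[of a "a - b"] Ints_add[of "a - b" b] by auto

lemma Ints_of_coprime_multiples:
  fixes x :: "'a::ring_1" and m n :: nat
  assumes "of_nat m * x \<in> \<int>" "of_nat n * x \<in> \<int>" "coprime m n"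
  shows "x \<in> \<int>"
proof -
  obtain u v where uv: "u * int m + v * int n = 1"
    using bezout_int[of "int m" "int n"] assms(3) by (metis coprime_iff_gcd_eq_1 coprime_int_iff)
  have "x = of_int (u * int m + v * int n) * x"
    using uv by simp
  also have "\<dots> = of_int u * (of_nat m * x) + of_int v * (of_nat n * x)"
    by (simp add: algebra_simps)
  also have "\<dots> \<in> \<int>"
    by (intro Ints_add Ints_mult[OF Ints_of_int] assms(1,2))
  finally show ?thesis .
qed

lemma Ints_of_mult_eq_of_int:
  fixes x :: "'a::field_char_0"
  assumes "of_nat p * x = of_int N" "int p dvd N" "p \<noteq> 0"
  shows "x \<in> \<int>"
proof -
  obtain s where "N = int p * s" using assms(2) by blast
  with assms(1,3) have "x = of_int s" by (simp add: mult_left_cancel)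
  then show ?thesis by simp
qed

section \<open>Sums of two squares modulo a prime\<close>

lemma QuadRes_minus_one_iff:
  fixes p :: nat
  assumes "Factorial_Ring.prime p" "2 < p"
  shows "QuadRes p (-1) \<longleftrightarrow> p mod 4 = 1"
proof -
  have not_zero: "\<not> [-1 = 0] (mod int p)"
    using assms by (auto simp: cong_def prime_gt_1_nat zmod_minus1)
  have one_ne: "\<not> [-1 = 1] (mod int p)"
  proof
    assume "[-1 = 1] (mod int p)"
    then have "p dvd 2"
      by (auto simp: cong_iff_dvd_diff simp flip: int_dvd_int_iff)
    then show False using assms by (auto dest: dvd_imp_le)
  qed
  have "QuadRes p (-1) \<longleftrightarrow> [Legendre (-1) p = 1] (mod p)"
    using not_zero one_ne by (auto simp: Legendre_def)
  also have "\<dots> \<longleftrightarrow> [(-1) ^ ((p - 1) div 2) = 1] (mod p)"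
    using euler_criterion[OF assms] by (metis cong_sym cong_trans)
  also have "\<dots> \<longleftrightarrow> even ((p - 1) div 2)"
    using one_ne by (auto simp: minus_one_power_iff)
  also have "\<dots> \<longleftrightarrow> p mod 4 = 1"
    using prime_odd_nat[OF assms] by presburger
  finally show ?thesis .
qed

lemma prime_dvd_square_plus_one_iff:
  fixes p :: nat
  assumes "Factorial_Ring.prime p"
  shows "(\<exists>j. p dvd j\<^sup>2 + 1) \<longleftrightarrow> \<not> [p = 3] (mod 4)"
proof (cases "p = 2")
  case True
  then have "p dvd 1\<^sup>2 + 1" "\<not> [p = 3] (mod 4)" by (simp_all add: cong_def)
  then show ?thesis by blast
next
  case False
  then have p: "2 < p" using prime_ge_2_nat[OF assms] by linarith
  have "(\<exists>j. p dvd j\<^sup>2 + 1) \<longleftrightarrow> (\<exists>j. int p dvd (int j)\<^sup>2 + 1)"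
    by (simp add: add.commute flip: int_dvd_int_iff)
  also have "\<dots> \<longleftrightarrow> QuadRes p (-1)"
  proof
    assume "\<exists>j. int p dvd (int j)\<^sup>2 + 1"
    then show "QuadRes p (-1)"
      unfolding QuadRes_def cong_iff_dvd_diff by auto
  next
    assume "QuadRes p (-1)"
    then obtain y where y: "[y\<^sup>2 = -1] (mod int p)" unfolding QuadRes_def by blast
    have "[(int (nat (y mod p)))\<^sup>2 = y\<^sup>2] (mod int p)"
      using p by (simp add: cong_def power_mod)
    then have "[(int (nat (y mod p)))\<^sup>2 = -1] (mod int p)"
      using y by (rule cong_trans)
    then have "int p dvd (int (nat (y mod p)))\<^sup>2 + 1"
      by (simp add: cong_iff_dvd_diff)
    then show "\<exists>j. int p dvd (int j)\<^sup>2 + 1" by blast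
  qed
  also have "\<dots> \<longleftrightarrow> \<not> [p = 3] (mod 4)"
    using QuadRes_minus_one_iff[OF assms p] prime_odd_nat[OF assms p]
    unfolding cong_def by presburger
  finally show ?thesis .
qed

lemma inj_on_scaled_squares_mod_prime:
  fixes A :: int
  assumes "Factorial_Ring.prime p" "\<not> int p dvd A"
  shows "inj_on (\<lambda>x::nat. A * (int x)\<^sup>2 mod int p) {x. 2 * x < p}"
proof (rule inj_onI)
  fix x y assume x: "x \<in> {x. 2 * x < p}" and y: "y \<in> {x. 2 * x < p}"
    and "A * (int x)\<^sup>2 mod int p = A * (int y)\<^sup>2 mod int p"
  then have "int p dvd A * (int x)\<^sup>2 - A * (int y)\<^sup>2"
    by (simp add: mod_eq_dvd_iff)
  also have "A * (int x)\<^sup>2 - A * (int y)\<^sup>2 = A * ((int x - int y) * (int x + int y))"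
    by (simp add: power2_eq_square algebra_simps)
  finally have "int p dvd int x - int y \<or> int p dvd int x + int y"
    using assms by (simp add: prime_dvd_mult_iff)
  moreover have "k = 0" if "int p dvd k" "\<bar>k\<bar> < int p" for k
    using that by (metis dvd_imp_le_int abs_of_nat not_le)
  moreover have "\<bar>int x - int y\<bar> < int p" "\<bar>int x + int y\<bar> < int p"
    using x y by auto
  ultimately show "x = y" by force
qed

lemma exists_sum_two_squares_cong:
  fixes A C :: int
  assumes "Factorial_Ring.prime p" "odd p" "\<not> int p dvd A"
  shows "\<exists>x y::nat. int p dvd A * ((int x)\<^sup>2 + (int y)\<^sup>2) + C"
proof -
  \<comment> \<open>Pigeonhole: \<open>A x\<^sup>2\<close> and \<open>- C - A y\<^sup>2\<close> each take \<open>(p + 1) / 2\<close> distinct values mod \<open>p\<close>.\<close>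
  define S where "S = {x::nat. 2 * x < p}"
  define f where "f x = A * (int x)\<^sup>2 mod int p" for x
  define g where "g y = (- C - A * (int y)\<^sup>2) mod int p" for y
  have card_S: "2 * card S = p + 1"
  proof -
    have "S = {..<Suc p div 2}" unfolding S_def using assms(2) by auto presburger+
    then show ?thesis using assms(2) by simp
  qed
  have inj_f: "inj_on f S"
    unfolding f_def S_def by (rule inj_on_scaled_squares_mod_prime[OF assms(1,3)])
  have inj_g: "inj_on g S"
  proof (rule inj_onI)
    fix y y' assume "y \<in> S" "y' \<in> S" "g y = g y'"
    then have "f y' = f y"
      unfolding f_def g_def by (simp add: mod_eq_dvd_iff)
    then show "y = y'" using inj_f \<open>y \<in> S\<close> \<open>y' \<in> S\<close> by (metis inj_onD)
  qed
  have "f ` S \<inter> g ` S \<noteq> {}"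
  proof
    assume disjoint: "f ` S \<inter> g ` S = {}"
    have "f ` S \<union> g ` S \<subseteq> {0..<int p}"
      unfolding f_def g_def using prime_gt_0_nat[OF assms(1)] by auto
    then have "card (f ` S \<union> g ` S) \<le> p"
      by (metis card_atLeastLessThan_int card_mono diff_zero finite_atLeastLessThan_int nat_int)
    moreover have "card (f ` S \<union> g ` S) = p + 1"
      using disjoint card_S card_image[OF inj_f] card_image[OF inj_g]
      by (subst card_Un_disjoint) (auto simp: S_def)
    ultimately show False by simp
  qed
  then obtain x y where "x \<in> S" "y \<in> S" "f x = g y" by blast
  then have "int p dvd A * (int x)\<^sup>2 - (- C - A * (int y)\<^sup>2)"
    unfolding f_def g_def by (simp add: mod_eq_dvd_iff)
  also have "A * (int x)\<^sup>2 - (- C - A * (int y)\<^sup>2) = A * ((int x)\<^sup>2 + (int y)\<^sup>2) + C"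
    by (simp add: algebra_simps)
  finally show ?thesis by blast
qed

lemma exists_nat_solution_linear_cong:
  fixes a b n :: int
  assumes "coprime a n" "0 < n"
  shows "\<exists>t::nat. n dvd int t * a + b"
proof -
  obtain u where u: "[a * u = 1] (mod n)" using cong_solve_coprime_int[OF assms(1)] by blast
  define t where "t = nat ((- b * u) mod n)"
  have "[int t * a + b = (- b * u) * a + b] (mod n)"
    unfolding t_def using assms(2) by (intro cong_add cong_mult) (simp_all add: cong_def)
  also have "[(- b * u) * a + b = - b * 1 + b] (mod n)"
    using cong_add[OF cong_scalar_left[OF u, of "- b"] cong_refl[of b]]
    by (simp add: algebra_simps)
  finally show ?thesis by (auto simp: cong_0_iff)
qed

section \<open>Elements of prime order in finite groups\<close>

context group
begin

lemma ord_eq_prime: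
  assumes "a \<in> carrier G" "a \<noteq> \<one>" "Factorial_Ring.prime p" "a [^] p = \<one>"
  shows "ord a = p"
proof -
  have "ord a dvd p" using assms(1,4) pow_eq_id by blast
  moreover have "ord a \<noteq> 1" using assms(1,2) ord_eq_1 by blast
  ultimately show ?thesis using assms(3) by (meson prime_nat_iff)
qed

lemma pow_card_subgroup_eq_one:
  assumes "subgroup H G" "x \<in> H"
  shows "x [^] card H = \<one>"
proof -
  interpret H: group "G\<lparr>carrier := H\<rparr>"
    using subgroup_imp_group[OF assms(1)] .
  have "x [^]\<^bsub>G\<lparr>carrier := H\<rparr>\<^esub> order (G\<lparr>carrier := H\<rparr>) = \<one>"
    using H.pow_order_eq_1 assms(2) by simp
  then show ?thesis by (simp add: order_def nat_pow_def)
qed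

lemma exists_pow_prime_eq_one:
  assumes "finite (carrier G)" "Factorial_Ring.prime p" "p dvd order G"
  shows "\<exists>a\<in>carrier G. a \<noteq> \<one> \<and> a [^] p = \<one>"
proof -
  obtain m where "order G = p ^ 1 * m" using assms(3) by auto
  then obtain H where H: "subgroup H G" "card H = p ^ 1"
    using sylow_thm[OF assms(2) is_group _ assms(1)] by blast
  have "H \<noteq> {\<one>}" using H(2) prime_gt_1_nat[OF assms(2)] by auto
  then obtain a where "a \<in> H" "a \<noteq> \<one>" using subgroup.one_closed[OF H(1)] by blast
  moreover have "a [^] p = \<one>" using pow_card_subgroup_eq_one[OF H(1) \<open>a \<in> H\<close>] H(2) by simp
  ultimately show ?thesis using subgroup.mem_carrier[OF H(1)] by blast
qed

lemma card_set_mult_subgroups: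
  assumes "subgroup H G" "subgroup K G" "H \<inter> K = {\<one>}"
  shows "card (H <#> K) = card H * card K"
proof -
  have "inj_on (\<lambda>(h, k). h \<otimes> k) (H \<times> K)"
  proof (rule inj_onI, clarify)
    fix h k h' k' assume hk: "h \<in> H" "k \<in> K" "h' \<in> H" "k' \<in> K" and eq: "h \<otimes> k = h' \<otimes> k'"
    have carrier: "h \<in> carrier G" "k \<in> carrier G" "h' \<in> carrier G" "k' \<in> carrier G"
      using hk assms(1,2) subgroup.mem_carrier by metis+
    define x where "x = inv h' \<otimes> h"
    have x_k: "x \<otimes> k = k'"
      using eq carrier by (simp add: x_def m_assoc inv_solve_left')
    then have "x = k' \<otimes> inv k"
      using carrier by (simp add: x_def inv_solve_right)
    then have "x \<in> K"
      using hk assms(2) by (auto intro: subgroup.m_closed subgroup.m_inv_closed)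
    moreover have "x \<in> H"
      unfolding x_def using hk assms(1) by (auto intro: subgroup.m_closed subgroup.m_inv_closed)
    ultimately have "x = \<one>" using assms(3) by blast
    then show "h = h' \<and> k = k'"
      using x_k carrier by (simp add: x_def inv_solve_left')
  qed
  moreover have "(\<lambda>(h, k). h \<otimes> k) ` (H \<times> K) = H <#> K"
    unfolding set_mult_def by auto
  ultimately show ?thesis
    by (simp add: card_image card_cartesian_product flip: \<open>_ ` _ = H <#> K\<close>)
qed

lemma prime_square_dvd_order_cases:
  assumes "finite (carrier G)" "Factorial_Ring.prime p" "p\<^sup>2 dvd order G"
  obtains c where "c \<in> carrier G" "c [^] p \<noteq> \<one>" "c [^] p\<^sup>2 = \<one>"
  | a b where "a \<in> carrier G" "a \<noteq> \<one>" "a [^] p = \<one>"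
      "b \<in> carrier G" "b [^] p = \<one>" "b \<notin> generate G {a}"
proof -
  obtain m where "order G = p\<^sup>2 * m" using assms(3) by auto
  then obtain H where H: "subgroup H G" "card H = p\<^sup>2"
    using sylow_thm[OF assms(2) is_group _ assms(1)] by blast
  have H_carrier: "H \<subseteq> carrier G" using H(1) subgroup.subset by blast
  show thesis
  proof (cases "\<exists>c\<in>H. c [^] p \<noteq> \<one>")
    case True
    then obtain c where c: "c \<in> H" "c [^] p \<noteq> \<one>" by blast
    have "c [^] p\<^sup>2 = \<one>" using pow_card_subgroup_eq_one[OF H(1) c(1)] H(2) by simp
    then show thesis using that(1) c H_carrier by blast
  next
    case False
    then have H_pow: "\<forall>c\<in>H. c [^] p = \<one>" by blast
    have "1 < p" using prime_gt_1_nat[OF assms(2)] .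
    then have "p ^ 1 < p ^ 2" using power_strict_increasing_iff[of p 1 2] by simp
    then have "H \<noteq> {\<one>}" using H(2) \<open>1 < p\<close> by auto
    then obtain a where a: "a \<in> H" "a \<noteq> \<one>" using subgroup.one_closed[OF H(1)] by blast
    have a_carrier: "a \<in> carrier G" using a(1) H_carrier by blast
    have "card (generate G {a}) < card H"
      using generate_pow_card[OF a_carrier] ord_eq_prime[OF a_carrier a(2) assms(2)] H_pow a(1)
        H(2) \<open>p ^ 1 < p ^ 2\<close> by simp
    moreover have "finite (generate G {a})"
      using finite_subset[OF generate_incl assms(1)] a_carrier by blast
    ultimately have "\<not> H \<subseteq> generate G {a}" by (meson card_mono leD)
    then obtain b where "b \<in> H" "b \<notin> generate G {a}" by blast
    then show thesis using that(2) a a_carrier H_pow H_carrier by blast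
  qed
qed

lemma exists_pow_prime_torsion_pair:
  assumes "finite (carrier G)" "g \<in> carrier G" "h \<in> carrier G" "\<not> (g = \<one> \<and> h = \<one>)"
  obtains p k :: nat where "Factorial_Ring.prime p" "p dvd order G"
    "(g [^] k) [^] p = \<one>" "(h [^] k) [^] p = \<one>" "\<not> (g [^] k = \<one> \<and> h [^] k = \<one>)"
proof -
  define d where "d = lcm (ord g) (ord h)"
  have d_dvd: "d dvd order G"
    unfolding d_def using ord_dvd_group_order assms(2,3) by simp
  have "order G \<noteq> 0" using assms(1) by (simp add: order_gt_0_iff_finite[symmetric])
  then have "d \<noteq> 0" using d_dvd by auto
  have pow_d: "g [^] d = \<one>" "h [^] d = \<one>"
    unfolding d_def using assms(2,3) pow_eq_id by simp_all
  have "d \<noteq> 1"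
  proof
    assume "d = 1"
    then have "ord g = 1" "ord h = 1" unfolding d_def by simp_all
    then show False using assms(2-4) ord_eq_1 by blast
  qed
  then obtain p where p: "Factorial_Ring.prime p" "p dvd d" using prime_factor_nat by blast
  define k where "k = d div p"
  have d_eq: "d = k * p" unfolding k_def using p(2) by simp
  have "k < d"
    unfolding k_def using \<open>d \<noteq> 0\<close> prime_gt_1_nat[OF p(1)] by (intro div_less_dividend) auto
  have "0 < k" using d_eq \<open>d \<noteq> 0\<close> by (cases "k = 0") auto
  have nontrivial: "\<not> (g [^] k = \<one> \<and> h [^] k = \<one>)"
  proof
    assume "g [^] k = \<one> \<and> h [^] k = \<one>"
    then have "d dvd k" unfolding d_def using pow_eq_id assms(2,3) by simp
    with \<open>0 < k\<close> \<open>k < d\<close> show False using nat_dvd_not_less by blast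
  qed
  have pow_p: "(g [^] k) [^] p = \<one>" "(h [^] k) [^] p = \<one>"
    using pow_d d_eq assms(2,3) by (simp_all add: nat_pow_pow)
  have p_dvd: "p dvd order G" using p(2) d_dvd by (rule dvd_trans)
  show thesis by (rule that[OF p(1) p_dvd pow_p nontrivial])
qed

lemma card_generate_eq_prime:
  assumes "Factorial_Ring.prime p" "x \<in> carrier G" "x \<noteq> \<one>" "x [^] p = \<one>"
  shows "card (generate G {x}) = p"
  using generate_pow_card[OF assms(2)] ord_eq_prime[OF assms(2,3,1,4)] by simp

lemma generate_inter_trivial:
  fixes p :: nat
  assumes "finite (carrier G)" "Factorial_Ring.prime p"
    and "a \<in> carrier G" "a [^] p = \<one>" "c \<in> carrier G" "c \<noteq> \<one>" "c [^] p = \<one>"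
    and "c \<notin> generate G {a}"
  shows "generate G {a} \<inter> generate G {c} = {\<one>}"
proof -
  define C where "C = generate G {c}"
  have C: "subgroup C G" "card C = p"
    unfolding C_def using generate_is_subgroup assms(5) card_generate_eq_prime[OF assms(2,5-7)]
    by auto
  have "x = \<one>" if x_A: "x \<in> generate G {a}" and x_C: "x \<in> C" for x
  proof (rule ccontr)
    assume "x \<noteq> \<one>"
    have x_carrier: "x \<in> carrier G" using subgroup.mem_carrier[OF C(1) x_C] .
    have "x [^] p = \<one>" using pow_card_subgroup_eq_one[OF C(1) x_C] unfolding C(2) .
    then have "card (generate G {x}) = card C"
      using card_generate_eq_prime[OF assms(2) x_carrier \<open>x \<noteq> \<one>\<close>] C(2) by simp
    moreover have "generate G {x} \<subseteq> C" using generate_subgroup_incl[OF _ C(1)] x_C by blast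
    moreover have "finite C" using finite_subset[OF subgroup.subset[OF C(1)] assms(1)] .
    ultimately have "C = generate G {x}" using card_subset_eq by blast
    also have "\<dots> \<subseteq> generate G {a}"
      using generate_subgroup_incl[OF _ generate_is_subgroup] x_A assms(3) by blast
    finally show False using assms(8) generate.incl[of c "{c}"] unfolding C_def by blast
  qed
  then show ?thesis
    unfolding C_def using generate.one by blast
qed

end

lemma (in comm_group) prime_torsion_in_generate:
  assumes "finite (carrier G)" "Factorial_Ring.prime p" "\<not> p\<^sup>2 dvd order G"
    and "a \<in> carrier G" "a \<noteq> \<one>" "a [^] p = \<one>" "c \<in> carrier G" "c [^] p = \<one>"
  shows "c \<in> generate G {a}"
proof (rule ccontr)
  assume c_notin: "c \<notin> generate G {a}"
  then have "c \<noteq> \<one>" using generate.one by blast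
  have subgroups: "subgroup (generate G {a}) G" "subgroup (generate G {c}) G"
    using generate_is_subgroup assms(4,7) by auto
  have "card (generate G {a} <#> generate G {c}) = p\<^sup>2"
    using card_set_mult_subgroups[OF subgroups generate_inter_trivial[OF assms(1,2,4,6,7) _ _ c_notin]]
      card_generate_eq_prime[OF assms(2,4-6)] card_generate_eq_prime[OF assms(2,7) \<open>c \<noteq> \<one>\<close> assms(8)]
      \<open>c \<noteq> \<one>\<close> assms(8)
    by (simp add: power2_eq_square)
  moreover have "subgroup (generate G {a} <#> generate G {c}) G"
    using mult_subgroups[OF subgroups] .
  ultimately have "p\<^sup>2 dvd order G" using lagrange by (metis dvd_triv_right)
  with assms(3) show False ..
qed

section \<open>Linking forms\<close>

locale linking_form_group = comm_group G for G (structure) +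
  fixes lam :: "'a \<Rightarrow> 'a \<Rightarrow> rat"
  assumes linking_form: "linking_form G lam"
begin

lemma lam_sym: "x \<in> carrier G \<Longrightarrow> y \<in> carrier G \<Longrightarrow> lam x y \<equiv>\<^sub>\<int> lam y x"
  using linking_form unfolding linking_form_def cong_Ints_def by blast

lemma lam_mult_left:
  "x \<in> carrier G \<Longrightarrow> y \<in> carrier G \<Longrightarrow> z \<in> carrier G \<Longrightarrow> lam (x \<otimes> y) z \<equiv>\<^sub>\<int> lam x z + lam y z"
  using linking_form unfolding linking_form_def cong_Ints_def by blast

lemma lam_nondegenerate: "x \<in> carrier G \<Longrightarrow> (\<And>y. y \<in> carrier G \<Longrightarrow> lam x y \<in> \<int>) \<Longrightarrow> x = \<one>"
  using linking_form unfolding linking_form_def by blast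

lemma lam_mult_right:
  assumes "x \<in> carrier G" "y \<in> carrier G" "z \<in> carrier G"
  shows "lam z (x \<otimes> y) \<equiv>\<^sub>\<int> lam z x + lam z y"
proof -
  have "lam z (x \<otimes> y) \<equiv>\<^sub>\<int> lam (x \<otimes> y) z" using assms by (intro lam_sym) auto
  also have "\<dots> \<equiv>\<^sub>\<int> lam x z + lam y z" using assms by (rule lam_mult_left)
  also have "\<dots> \<equiv>\<^sub>\<int> lam z x + lam z y" using assms by (intro cong_Ints_add lam_sym)
  finally show ?thesis .
qed

lemma lam_one_left:
  assumes "z \<in> carrier G"
  shows "lam \<one> z \<in> \<int>"
proof -
  have "lam (\<one> \<otimes> \<one>) z \<equiv>\<^sub>\<int> lam \<one> z + lam \<one> z" using assms by (intro lam_mult_left) auto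
  then have "- lam \<one> z \<in> \<int>" by (simp add: cong_Ints_def)
  then show ?thesis by (metis Ints_minus minus_minus)
qed

lemma lam_pow_left:
  assumes "x \<in> carrier G" "z \<in> carrier G"
  shows "lam (x [^] k) z \<equiv>\<^sub>\<int> of_nat k * lam x z"
proof (induction k)
  case 0
  then show ?case using lam_one_left[OF assms(2)] by (simp add: cong_Ints_def)
next
  case (Suc k)
  have "lam (x [^] Suc k) z = lam (x [^] k \<otimes> x) z" by simp
  also have "\<dots> \<equiv>\<^sub>\<int> lam (x [^] k) z + lam x z" using assms by (intro lam_mult_left) auto
  also have "\<dots> \<equiv>\<^sub>\<int> of_nat k * lam x z + lam x z" using Suc.IH by (intro cong_Ints_add) auto
  also have "\<dots> = of_nat (Suc k) * lam x z" by (simp add: algebra_simps)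
  finally show ?case .
qed

lemma lam_pow_right:
  assumes "x \<in> carrier G" "z \<in> carrier G"
  shows "lam z (x [^] k) \<equiv>\<^sub>\<int> of_nat k * lam z x"
proof -
  have "lam z (x [^] k) \<equiv>\<^sub>\<int> lam (x [^] k) z" using assms by (intro lam_sym) auto
  also have "\<dots> \<equiv>\<^sub>\<int> of_nat k * lam x z" using assms by (rule lam_pow_left)
  also have "\<dots> \<equiv>\<^sub>\<int> of_nat k * lam z x" using assms by (intro cong_Ints_mult_left lam_sym) auto
  finally show ?thesis .
qed

lemma lam_mult_diag:
  assumes "x \<in> carrier G" "y \<in> carrier G"
  shows "lam (x \<otimes> y) (x \<otimes> y) \<equiv>\<^sub>\<int> lam x x + 2 * lam x y + lam y y"
proof -
  have "lam (x \<otimes> y) (x \<otimes> y) \<equiv>\<^sub>\<int> lam x (x \<otimes> y) + lam y (x \<otimes> y)"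
    using assms by (intro lam_mult_left) auto
  also have "\<dots> \<equiv>\<^sub>\<int> (lam x x + lam x y) + (lam y x + lam y y)"
    using assms by (intro cong_Ints_add lam_mult_right)
  also have "\<dots> \<equiv>\<^sub>\<int> (lam x x + lam x y) + (lam x y + lam y y)"
    using assms by (intro cong_Ints_add cong_Ints_refl lam_sym)
  also have "\<dots> = lam x x + 2 * lam x y + lam y y" by simp
  finally show ?thesis .
qed

lemma lam_pow_diag:
  assumes "x \<in> carrier G"
  shows "lam (x [^] k) (x [^] k) \<equiv>\<^sub>\<int> of_nat k ^ 2 * lam x x"
proof -
  have "lam (x [^] k) (x [^] k) \<equiv>\<^sub>\<int> of_nat k * lam x (x [^] k)"
    using assms by (intro lam_pow_left) auto
  also have "\<dots> \<equiv>\<^sub>\<int> of_nat k * (of_nat k * lam x x)"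
    using assms by (intro cong_Ints_mult_left lam_pow_right) auto
  also have "\<dots> = of_nat k ^ 2 * lam x x" by (simp add: power2_eq_square)
  finally show ?thesis .
qed

lemma lam_torsion_Ints:
  assumes "a \<in> carrier G" "a [^] n = \<one>" "y \<in> carrier G"
  shows "of_nat n * lam a y \<in> \<int>"
  using lam_pow_left[OF assms(1,3), of n] lam_one_left[OF assms(3)] assms(2)
  by (simp add: cong_Ints_Ints_iff)

definition doubled_form_anisotropic :: bool where
  "doubled_form_anisotropic \<longleftrightarrow>
     (\<forall>g\<in>carrier G. \<forall>h\<in>carrier G. lam g g + lam h h \<in> \<int> \<longrightarrow> g = \<one> \<and> h = \<one>)"

lemma isotropic_cone_orth_sum_eq_one_iff:
  "isotropic_cone (G \<times>\<times> G) (orth_sum lam lam) = {\<one>\<^bsub>G \<times>\<times> G\<^esub>} \<longleftrightarrow> doubled_form_anisotropic"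
proof -
  have cone: "(g, h) \<in> isotropic_cone (G \<times>\<times> G) (orth_sum lam lam) \<longleftrightarrow>
      g \<in> carrier G \<and> h \<in> carrier G \<and> lam g g + lam h h \<in> \<int>" for g h
    by (simp add: isotropic_cone_def orth_sum_def)
  have "lam \<one> \<one> + lam \<one> \<one> \<in> \<int>" using lam_one_left[OF one_closed] by (intro Ints_add)
  then show ?thesis
    unfolding doubled_form_anisotropic_def set_eq_iff using cone by auto
qed

lemma doubled_form_anisotropicD:
  "doubled_form_anisotropic \<Longrightarrow> g \<in> carrier G \<Longrightarrow> h \<in> carrier G \<Longrightarrow> lam g g + lam h h \<in> \<int> \<Longrightarrow> g = \<one>"
  unfolding doubled_form_anisotropic_def by blast

lemma cong_3_mod_4_if_doubled_form_anisotropic: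
  assumes "finite (carrier G)" "doubled_form_anisotropic"
    and "Factorial_Ring.prime p" "p dvd order G"
  shows "[p = 3] (mod 4)"
proof (rule ccontr)
  assume "\<not> [p = 3] (mod 4)"
  then obtain j m where jm: "j\<^sup>2 + 1 = p * m"
    using prime_dvd_square_plus_one_iff[OF assms(3)] by (auto elim: dvdE)
  obtain a where a: "a \<in> carrier G" "a \<noteq> \<one>" "a [^] p = \<one>"
    using exists_pow_prime_eq_one[OF assms(1,3,4)] by blast
  have "lam a a + lam (a [^] j) (a [^] j) \<equiv>\<^sub>\<int> lam a a + of_nat j ^ 2 * lam a a"
    using a(1) by (intro cong_Ints_add cong_Ints_refl lam_pow_diag)
  also have "\<dots> = (1 + of_nat j ^ 2) * lam a a" by (simp add: algebra_simps)
  also have "\<dots> = of_nat m * (of_nat p * lam a a)"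
    using arg_cong[OF jm, of "of_nat :: nat \<Rightarrow> rat"] by (simp add: mult.assoc)
  finally have "lam a a + lam (a [^] j) (a [^] j) \<in> \<int>"
    using lam_torsion_Ints[OF a(1,3,1)] by (simp add: cong_Ints_Ints_iff)
  then have "a = \<one>"
    by (rule doubled_form_anisotropicD[OF assms(2) a(1) nat_pow_closed[OF a(1)]])
  with a(2) show False ..
qed

lemma exists_lam_orthogonal_translate:
  fixes p :: nat
  assumes "Factorial_Ring.prime p" "a \<in> carrier G" "a [^] p = \<one>" "b \<in> carrier G"
    and "lam a a \<notin> \<int>"
  shows "\<exists>t::nat. lam a (a [^] t \<otimes> b) \<in> \<int>"
proof -
  have "p \<noteq> 0" using assms(1) by auto
  obtain \<alpha> where \<alpha>: "of_nat p * lam a a = of_int \<alpha>"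
    using lam_torsion_Ints[OF assms(2,3,2)] by (auto elim: Ints_cases)
  obtain \<gamma> where \<gamma>: "of_nat p * lam a b = of_int \<gamma>"
    using lam_torsion_Ints[OF assms(2,3,4)] by (auto elim: Ints_cases)
  have "\<not> int p dvd \<alpha>" using Ints_of_mult_eq_of_int[OF \<alpha> _ \<open>p \<noteq> 0\<close>] assms(5) by blast
  moreover have "Factorial_Ring.prime (int p)" using assms(1) by simp
  ultimately have "coprime \<alpha> (int p)" using prime_imp_coprime coprime_commute by blast
  then obtain t :: nat where t: "int p dvd int t * \<alpha> + \<gamma>"
    using exists_nat_solution_linear_cong \<open>p \<noteq> 0\<close> by force
  have "lam a (a [^] t \<otimes> b) \<equiv>\<^sub>\<int> lam a (a [^] t) + lam a b"
    using assms(2,4) by (intro lam_mult_right) auto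
  also have "\<dots> \<equiv>\<^sub>\<int> of_nat t * lam a a + lam a b"
    using assms(2) by (intro cong_Ints_add cong_Ints_refl lam_pow_right)
  finally have "lam a (a [^] t \<otimes> b) \<equiv>\<^sub>\<int> of_nat t * lam a a + lam a b" .
  moreover have "of_nat p * (of_nat t * lam a a + lam a b) = of_int (int t * \<alpha> + \<gamma>)"
    using \<alpha> \<gamma> by (simp add: algebra_simps)
  then have "of_nat t * lam a a + lam a b \<in> \<int>"
    using Ints_of_mult_eq_of_int t \<open>p \<noteq> 0\<close> by blast
  ultimately have "lam a (a [^] t \<otimes> b) \<in> \<int>" using cong_Ints_Ints_iff by blast
  then show ?thesis ..
qed

lemma lam_diag_mult_orthogonal:
  assumes "a \<in> carrier G" "c \<in> carrier G" "lam a c \<in> \<int>"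
  shows "lam (a [^] x \<otimes> c) (a [^] x \<otimes> c) \<equiv>\<^sub>\<int> of_nat x ^ 2 * lam a a + lam c c"
proof -
  have "lam (a [^] x \<otimes> c) (a [^] x \<otimes> c) \<equiv>\<^sub>\<int>
      lam (a [^] x) (a [^] x) + 2 * lam (a [^] x) c + lam c c"
    using assms(1,2) by (intro lam_mult_diag) auto
  also have "\<dots> \<equiv>\<^sub>\<int> of_nat x ^ 2 * lam a a + 2 * (of_nat x * lam a c) + lam c c"
    using assms(1,2)
    by (intro cong_Ints_add cong_Ints_refl lam_pow_diag cong_Ints_mult_left lam_pow_left) auto
  also have "\<dots> = (of_nat x ^ 2 * lam a a + lam c c) + 2 * of_nat x * lam a c"
    by (simp add: algebra_simps)
  also have "\<dots> \<equiv>\<^sub>\<int> of_nat x ^ 2 * lam a a + lam c c"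
    using assms(3) by (intro cong_Ints_add_Ints) simp
  finally show ?thesis .
qed

lemma exists_isotropic_pair_if_orthogonal:
  fixes p :: nat
  assumes "Factorial_Ring.prime p" "odd p"
    and "a \<in> carrier G" "a [^] p = \<one>" "lam a a \<notin> \<int>"
    and "c \<in> carrier G" "c [^] p = \<one>" "lam a c \<in> \<int>"
  shows "\<exists>(x::nat) (y::nat). lam (a [^] x \<otimes> c) (a [^] x \<otimes> c) + lam (a [^] y) (a [^] y) \<in> \<int>"
proof -
  have "p \<noteq> 0" using assms(1) by auto
  obtain \<alpha> where \<alpha>: "of_nat p * lam a a = of_int \<alpha>"
    using lam_torsion_Ints[OF assms(3,4,3)] by (auto elim: Ints_cases)
  obtain \<beta> where \<beta>: "of_nat p * lam c c = of_int \<beta>"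
    using lam_torsion_Ints[OF assms(6,7,6)] by (auto elim: Ints_cases)
  have "\<not> int p dvd \<alpha>"
    using Ints_of_mult_eq_of_int[OF \<alpha> _ \<open>p \<noteq> 0\<close>] assms(5) by blast
  then obtain x y :: nat where xy: "int p dvd \<alpha> * ((int x)\<^sup>2 + (int y)\<^sup>2) + \<beta>"
    using exists_sum_two_squares_cong assms(1,2) by blast
  have congr: "lam (a [^] x \<otimes> c) (a [^] x \<otimes> c) + lam (a [^] y) (a [^] y) \<equiv>\<^sub>\<int>
      (of_nat x ^ 2 * lam a a + lam c c) + of_nat y ^ 2 * lam a a"
    using assms(3,6,8) by (intro cong_Ints_add lam_diag_mult_orthogonal lam_pow_diag)
  have "of_nat p * ((of_nat x ^ 2 * lam a a + lam c c) + of_nat y ^ 2 * lam a a)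
      = (of_nat x ^ 2 + of_nat y ^ 2) * (of_nat p * lam a a) + of_nat p * lam c c"
    by (simp add: algebra_simps)
  also have "\<dots> = of_int (\<alpha> * ((int x)\<^sup>2 + (int y)\<^sup>2) + \<beta>)"
    unfolding \<alpha> \<beta> by (simp add: algebra_simps)
  finally have "(of_nat x ^ 2 * lam a a + lam c c) + of_nat y ^ 2 * lam a a \<in> \<int>"
    using Ints_of_mult_eq_of_int xy \<open>p \<noteq> 0\<close> by blast
  with congr have "lam (a [^] x \<otimes> c) (a [^] x \<otimes> c) + lam (a [^] y) (a [^] y) \<in> \<int>"
    using cong_Ints_Ints_iff by blast
  then show ?thesis by blast
qed

lemma not_doubled_form_anisotropic_if_independent:
  fixes p :: nat
  assumes "Factorial_Ring.prime p" "odd p"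
    and "a \<in> carrier G" "a \<noteq> \<one>" "a [^] p = \<one>"
    and "b \<in> carrier G" "b [^] p = \<one>" "b \<notin> generate G {a}"
  shows "\<not> doubled_form_anisotropic"
proof
  assume anisotropic: doubled_form_anisotropic
  have gen: "subgroup (generate G {a}) G" using assms(3) generate_is_subgroup by simp
  have a_gen: "a [^] n \<in> generate G {a}" for n :: nat
    unfolding generate_pow[OF assms(3)] by (metis (mono_tags) UNIV_I int_pow_int mem_Collect_eq)
  have "lam a a \<notin> \<int>"
  proof
    assume "lam a a \<in> \<int>"
    then have "lam a a + lam \<one> \<one> \<in> \<int>" using lam_one_left[OF one_closed] by (intro Ints_add)
    then show False using doubled_form_anisotropicD[OF anisotropic assms(3) one_closed] assms(4) by blast
  qed
  then obtain t :: nat where t: "lam a (a [^] t \<otimes> b) \<in> \<int>"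
    using exists_lam_orthogonal_translate assms(1,3,5,6) by blast
  define c where "c = a [^] t \<otimes> b"
  have "a [^] (p * t) = \<one>" using assms(3,5) by (metis nat_pow_one nat_pow_pow)
  then have "c [^] p = \<one>"
    unfolding c_def using assms(3,6,7) by (simp add: pow_mult_distrib m_comm nat_pow_pow mult.commute)
  moreover have c: "c \<in> carrier G" "lam a c \<in> \<int>"
    unfolding c_def using t assms(3,6) by auto
  ultimately obtain x y :: nat
    where "lam (a [^] x \<otimes> c) (a [^] x \<otimes> c) + lam (a [^] y) (a [^] y) \<in> \<int>"
    using exists_isotropic_pair_if_orthogonal[OF assms(1-3,5) \<open>lam a a \<notin> \<int>\<close> c(1)] c(2)
    by blast
  then have "a [^] x \<otimes> c = \<one>"
    by (rule doubled_form_anisotropicD[OF anisotropic m_closed[OF nat_pow_closed[OF assms(3)] c(1)]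
          nat_pow_closed[OF assms(3)]])
  have "b \<otimes> (a [^] x \<otimes> a [^] t) = (a [^] x \<otimes> a [^] t) \<otimes> b"
    using assms(3,6) by (intro m_comm) simp_all
  also have "\<dots> = a [^] x \<otimes> c"
    unfolding c_def using assms(3,6) by (simp add: m_assoc)
  finally have "b \<otimes> (a [^] x \<otimes> a [^] t) = \<one>"
    using \<open>a [^] x \<otimes> c = \<one>\<close> by simp
  then have "inv (a [^] x \<otimes> a [^] t) = b"
    by (rule inv_equality) (use assms(3,6) in simp_all)
  moreover have "inv (a [^] x \<otimes> a [^] t) \<in> generate G {a}"
    using subgroup.m_inv_closed[OF gen subgroup.m_closed[OF gen a_gen a_gen]] .
  ultimately show False using assms(8) by simp
qed

lemma not_square_dvd_order_if_doubled_form_anisotropic: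
  assumes "finite (carrier G)" "doubled_form_anisotropic" "Factorial_Ring.prime p" "odd p"
  shows "\<not> p\<^sup>2 dvd order G"
proof
  assume "p\<^sup>2 dvd order G"
  show False
  proof (rule prime_square_dvd_order_cases[OF assms(1,3) \<open>p\<^sup>2 dvd order G\<close>])
    fix c assume c: "c \<in> carrier G" "c [^] p \<noteq> \<one>" "c [^] p\<^sup>2 = \<one>"
    have "lam (c [^] p) (c [^] p) \<equiv>\<^sub>\<int> of_nat p ^ 2 * lam c c"
      using c(1) by (rule lam_pow_diag)
    moreover have "of_nat (p\<^sup>2) * lam c c \<in> \<int>"
      using lam_torsion_Ints[OF c(1) c(3) c(1)] .
    ultimately have "lam (c [^] p) (c [^] p) + lam \<one> \<one> \<in> \<int>"
      using cong_Ints_Ints_iff lam_one_left[OF one_closed] by (auto intro: Ints_add)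
    then have "c [^] p = \<one>"
      by (rule doubled_form_anisotropicD[OF assms(2) nat_pow_closed[OF c(1)] one_closed])
    with c(2) show False ..
  next
    fix a b assume "a \<in> carrier G" "a \<noteq> \<one>" "a [^] p = \<one>"
      "b \<in> carrier G" "b [^] p = \<one>" "b \<notin> generate G {a}"
    then show False
      using not_doubled_form_anisotropic_if_independent assms(2-4) by blast
  qed
qed

lemma lam_diag_notin_Ints:
  assumes "finite (carrier G)" "Factorial_Ring.prime p" "\<not> p\<^sup>2 dvd order G"
    and "a \<in> carrier G" "a \<noteq> \<one>" "a [^] p = \<one>"
  shows "lam a a \<notin> \<int>"
proof
  assume lam_aa: "lam a a \<in> \<int>"
  \<comment> \<open>then each \<open>lam a y\<close> is killed by \<open>p\<close> and, as \<open>y\<^sup>m \<in> \<langle>a\<rangle>\<close>, by \<open>m = |G| / p\<close>\<close>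
  have "p dvd order G"
    using ord_dvd_group_order[OF assms(4)] ord_eq_prime[OF assms(4,5,2,6)] by simp
  then obtain m where m: "order G = p * m" ..
  have "\<not> p dvd m" using assms(3) m by (auto simp: power2_eq_square)
  then have "coprime m p"
    using prime_imp_coprime[OF assms(2)] coprime_commute by blast
  have "lam a y \<in> \<int>" if y: "y \<in> carrier G" for y
  proof -
    have "(y [^] m) [^] p = \<one>"
      using pow_order_eq_1[OF y] m y by (simp add: nat_pow_pow mult.commute)
    then have "y [^] m \<in> generate G {a}"
      by (rule prime_torsion_in_generate[OF assms nat_pow_closed[OF y]])
    then obtain i :: nat where i: "y [^] m = a [^] i"
      unfolding generate_pow_on_finite_carrier[OF assms(1,4)] by blast
    have "of_nat m * lam a y \<equiv>\<^sub>\<int> lam a (y [^] m)"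
      by (rule cong_Ints_sym) (rule lam_pow_right[OF y assms(4)])
    also have "\<dots> = lam a (a [^] i)" by (simp only: i)
    also have "\<dots> \<equiv>\<^sub>\<int> of_nat i * lam a a"
      using assms(4) by (intro lam_pow_right)
    finally have "of_nat m * lam a y \<equiv>\<^sub>\<int> of_nat i * lam a a" .
    moreover have "of_nat i * lam a a \<in> \<int>" using lam_aa by simp
    ultimately have "of_nat m * lam a y \<in> \<int>" using cong_Ints_Ints_iff by blast
    moreover have "of_nat p * lam a y \<in> \<int>"
      using lam_torsion_Ints[OF assms(4,6) y] .
    ultimately show ?thesis
      using Ints_of_coprime_multiples \<open>coprime m p\<close> by blast
  qed
  then have "a = \<one>" using lam_nondegenerate[OF assms(4)] by blast
  with assms(5) show False ..
qed

lemma prime_torsion_pair_not_isotropic: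
  assumes "finite (carrier G)" "Factorial_Ring.prime p" "[p = 3] (mod 4)" "\<not> p\<^sup>2 dvd order G"
    and "a \<in> carrier G" "a \<noteq> \<one>" "a [^] p = \<one>" "c \<in> carrier G" "c [^] p = \<one>"
  shows "lam a a + lam c c \<notin> \<int>"
proof
  assume isotropic: "lam a a + lam c c \<in> \<int>"
  have "c \<in> generate G {a}"
    using prime_torsion_in_generate[OF assms(1,2,4-9)] .
  then obtain j :: nat where j: "c = a [^] j"
    unfolding generate_pow_on_finite_carrier[OF assms(1,5)] by blast
  have "lam a a + lam c c \<equiv>\<^sub>\<int> lam a a + of_nat j ^ 2 * lam a a"
    unfolding j using assms(5) by (intro cong_Ints_add cong_Ints_refl lam_pow_diag)
  also have "\<dots> = of_nat (j\<^sup>2 + 1) * lam a a" by (simp add: algebra_simps)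
  finally have "of_nat (j\<^sup>2 + 1) * lam a a \<in> \<int>"
    using isotropic cong_Ints_Ints_iff by blast
  moreover have "of_nat p * lam a a \<in> \<int>"
    using lam_torsion_Ints[OF assms(5,7,5)] .
  moreover have "\<not> p dvd j\<^sup>2 + 1"
    using prime_dvd_square_plus_one_iff[OF assms(2)] assms(3) by blast
  then have "coprime (j\<^sup>2 + 1) p"
    using prime_imp_coprime[OF assms(2)] coprime_commute by blast
  ultimately have "lam a a \<in> \<int>" by (rule Ints_of_coprime_multiples)
  with lam_diag_notin_Ints[OF assms(1,2,4-7)] show False ..
qed

lemma doubled_form_anisotropic_if_squarefree:
  assumes "finite (carrier G)" "squarefree (order G)"
    and "\<forall>p::nat. Factorial_Ring.prime p \<and> p dvd order G \<longrightarrow> [p = 3] (mod 4)"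
  shows doubled_form_anisotropic
  unfolding doubled_form_anisotropic_def
proof (intro ballI impI)
  fix g h assume g: "g \<in> carrier G" and h: "h \<in> carrier G"
    and isotropic: "lam g g + lam h h \<in> \<int>"
  show "g = \<one> \<and> h = \<one>"
  proof (rule ccontr)
    assume "\<not> (g = \<one> \<and> h = \<one>)"
    then obtain p k :: nat where p: "Factorial_Ring.prime p" "p dvd order G"
      and pow: "(g [^] k) [^] p = \<one>" "(h [^] k) [^] p = \<one>"
      and nontrivial: "\<not> (g [^] k = \<one> \<and> h [^] k = \<one>)"
      using exists_pow_prime_torsion_pair[OF assms(1) g h] by blast
    have "\<not> p\<^sup>2 dvd order G"
      using squarefreeD[OF assms(2)] p(1) by (auto simp: prime_nat_iff)
    have "[p = 3] (mod 4)" using assms(3) p by blast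
    have "lam (g [^] k) (g [^] k) + lam (h [^] k) (h [^] k) \<equiv>\<^sub>\<int>
        of_nat k ^ 2 * lam g g + of_nat k ^ 2 * lam h h"
      using g h by (intro cong_Ints_add lam_pow_diag)
    also have "\<dots> = of_nat k ^ 2 * (lam g g + lam h h)" by (simp add: algebra_simps)
    finally have "lam (g [^] k) (g [^] k) + lam (h [^] k) (h [^] k) \<equiv>\<^sub>\<int>
        of_nat k ^ 2 * (lam g g + lam h h)" .
    moreover have "of_nat k ^ 2 * (lam g g + lam h h) \<in> \<int>" using isotropic by simp
    ultimately have pair_isotropic: "lam (g [^] k) (g [^] k) + lam (h [^] k) (h [^] k) \<in> \<int>"
      using cong_Ints_Ints_iff by blast
    show False
    proof (cases "g [^] k = \<one>")
      case False
      with prime_torsion_pair_not_isotropic[OF assms(1) p(1) \<open>[p = 3] (mod 4)\<close>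
          \<open>\<not> p\<^sup>2 dvd order G\<close> _ _ pow(1) _ pow(2)] g h pair_isotropic
      show False by simp
    next
      case True
      with nontrivial have "h [^] k \<noteq> \<one>" by blast
      with prime_torsion_pair_not_isotropic[OF assms(1) p(1) \<open>[p = 3] (mod 4)\<close>
          \<open>\<not> p\<^sup>2 dvd order G\<close> _ _ pow(2) _ pow(1)] g h pair_isotropic
      show False by (simp add: add.commute)
    qed
  qed
qed

lemma squarefree_order_if_doubled_form_anisotropic:
  assumes "finite (carrier G)" "odd (order G)" "doubled_form_anisotropic"
  shows "squarefree (order G)"
proof -
  have "order G \<noteq> 0" using odd_pos[OF assms(2)] by simp
  have "\<not> p\<^sup>2 dvd order G" if p: "Factorial_Ring.prime p" for p :: nat
  proof
    assume square: "p\<^sup>2 dvd order G"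
    then have "p dvd order G" by (rule dvd_trans[rotated]) simp
    then have "odd p" using assms(2) by (metis dvd_trans)
    then show False
      using not_square_dvd_order_if_doubled_form_anisotropic[OF assms(1,3) p] square by blast
  qed
  then show ?thesis using squarefree_factorial_semiring[OF \<open>order G \<noteq> 0\<close>] by blast
qed

end

theorem mainTheorem4:
  fixes G :: "('a, 'm) monoid_scheme" and lam :: "'a \<Rightarrow> 'a \<Rightarrow> rat"
  assumes "comm_group G" and "finite (carrier G)" and "odd (order G)"
    and "linking_form G lam"
  shows "isotropic_cone (G \<times>\<times> G) (orth_sum lam lam) = {\<one>\<^bsub>G \<times>\<times> G\<^esub>}
     \<longleftrightarrow> (squarefree (order G) \<and>
          (\<forall>p::nat. Factorial_Ring.prime p \<and> p dvd order G \<longrightarrow> [p = 3] (mod 4)))"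
proof -
  interpret linking_form_group G lam
    using assms(1,4) by (simp add: linking_form_group_def linking_form_group_axioms_def)
  show ?thesis
    unfolding isotropic_cone_orth_sum_eq_one_iff
    using squarefree_order_if_doubled_form_anisotropic[OF assms(2,3)]
      cong_3_mod_4_if_doubled_form_anisotropic[OF assms(2)]
      doubled_form_anisotropic_if_squarefree[OF assms(2)]
    by blast
qed

end
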